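(* Let $U$ be a finite nonempty set, $(T,I,N)$ a residual triplet, $\widetilde{R}$ a $T$-preorder relation on $U$, $u,v\in U$ and $\lambda\in[0,1]$. (i) If the granules $\widetilde{R}^+_{1}(u)$ and $\widetilde{R}^-_{\lambda}(v)$ are $T$-disjoint, then $\widetilde{R}^-_{\lambda}(v)$ is adjacent to $\widetilde{R}^+_{1}(u)$. (ii) If the granules $\widetilde{R}^+_{\lambda}(u)$ and $\widetilde{R}^-_{1}(v)$ are $T$-disjoint, then $\widetilde{R}^+_{\lambda}(u)$ is adjacent to $\widetilde{R}^-_{1}(v)$. That is, every granule is adjacent to every granule with parameter $1$ from which it is $T$-disjoint.
   Context: A residual triplet $(T,I,N)$ consists of a left-continuous $t$-norm $T$, its residual implicator $I(x,y)=\sup\{\beta\in[0,1]: T(x,\beta)\le y\}$ and $N(x)=I(x,0)$. $\widetilde{R}:U\times U\to[0,1]$ is a $T$-preorder if reflexive and $T$-transitive. Granules: $\widetilde{R}^+_\lambda(u)$ is the fuzzy set $w\mapsto T(\widetilde{R}(w,u),\lambda)$ and $\widetilde{R}^-_\lambda(v)$ is $w\mapsto T(\widetilde{R}(v,w),\lambda)$. Fuzzy sets $B,C$ on $U$ are $T$-disjoint if $T(B(w),C(w))=0$ for all $w$. Adjacency: $\widetilde{R}^-_{\lambda_2}(v)$ is adjacent to $\widetilde{R}^+_{\lambda_1}(u)$ if $\lambda_1=I(\lambda_2,N(\widetilde{R}(v,u)))$; $\widetilde{R}^+_{\lambda_1}(u)$ is adjacent to $\widetilde{R}^-_{\lambda_2}(v)$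 if $\lambda_2=I(\lambda_1,N(\widetilde{R}(v,u)))$. *)

theory Defs
  imports "HOL-Analysis.Analysis"
begin

text \<open>t-norms are modelled as real functions whose behaviour on [0,1] matters.\<close>

definition tnorm :: "(real \<Rightarrow> real \<Rightarrow> real) \<Rightarrow> bool" where
  "tnorm T \<longleftrightarrow>
     (\<forall>x\<in>{0..1}. \<forall>y\<in>{0..1}. T x y \<in> {0..1}) \<and>
     (\<forall>x\<in>{0..1}. \<forall>y\<in>{0..1}. T x y = T y x) \<and>
     (\<forall>x\<in>{0..1}. \<forall>y\<in>{0..1}. \<forall>z\<in>{0..1}. T (T x y) z = T x (T y z)) \<and>
     (\<forall>x\<in>{0..1}. \<forall>x'\<in>{0..1}. \<forall>y\<in>{0..1}. x \<le> x' \<longrightarrow> T x y \<le> T x' y) \<and>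
     (\<forall>x\<in>{0..1}. T x 1 = x)"

text \<open>Left-continuity (in the first argument; by commutativity also in the second).\<close>
definition left_continuous_tnorm :: "(real \<Rightarrow> real \<Rightarrow> real) \<Rightarrow> bool" where
  "left_continuous_tnorm T \<longleftrightarrow> tnorm T \<and>
     (\<forall>y\<in>{0..1}. \<forall>x\<in>{0<..1}. ((\<lambda>z. T z y) \<longlongrightarrow> T x y) (at x within {0..<x}))"

definition res_impl :: "(real \<Rightarrow> real \<Rightarrow> real) \<Rightarrow> real \<Rightarrow> real \<Rightarrow> real" where
  "res_impl T x y = Sup {\<beta> \<in> {0..1}. T x \<beta> \<le> y}"

definition res_neg :: "(real \<Rightarrow> real \<Rightarrow> real) \<Rightarrow> real \<Rightarrow> real" where
  "res_neg T x = res_impl T x 0"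

definition t_preorder :: "(real \<Rightarrow> real \<Rightarrow> real) \<Rightarrow> 'a set \<Rightarrow> ('a \<Rightarrow> 'a \<Rightarrow> real) \<Rightarrow> bool" where
  "t_preorder T U R \<longleftrightarrow>
     (\<forall>x\<in>U. \<forall>y\<in>U. R x y \<in> {0..1}) \<and>
     (\<forall>x\<in>U. R x x = 1) \<and>
     (\<forall>x\<in>U. \<forall>y\<in>U. \<forall>z\<in>U. T (R x y) (R y z) \<le> R x z)"

definition gran_plus :: "(real \<Rightarrow> real \<Rightarrow> real) \<Rightarrow> ('a \<Rightarrow> 'a \<Rightarrow> real) \<Rightarrow> real \<Rightarrow> 'a \<Rightarrow> 'a \<Rightarrow> real" where
  "gran_plus T R lam u = (\<lambda>w. T (R w u) lam)"

definition gran_minus :: "(real \<Rightarrow> real \<Rightarrow> real) \<Rightarrow> ('a \<Rightarrow> 'a \<Rightarrow> real) \<Rightarrow> real \<Rightarrow> 'a \<Rightarrow> 'a \<Rightarrow> real" where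
  "gran_minus T R lam v = (\<lambda>w. T (R v w) lam)"

definition t_disjoint :: "(real \<Rightarrow> real \<Rightarrow> real) \<Rightarrow> 'a set \<Rightarrow> ('a \<Rightarrow> real) \<Rightarrow> ('a \<Rightarrow> real) \<Rightarrow> bool" where
  "t_disjoint T U B C \<longleftrightarrow> (\<forall>w\<in>U. T (B w) (C w) = 0)"

definition adj_minus_plus :: "(real \<Rightarrow> real \<Rightarrow> real) \<Rightarrow> ('a \<Rightarrow> 'a \<Rightarrow> real) \<Rightarrow> real \<Rightarrow> 'a \<Rightarrow> real \<Rightarrow> 'a \<Rightarrow> bool" where
  "adj_minus_plus T R lam2 v lam1 u \<longleftrightarrow> lam1 = res_impl T lam2 (res_neg T (R v u))"

definition adj_plus_minus :: "(real \<Rightarrow> real \<Rightarrow> real) \<Rightarrow> ('a \<Rightarrow> 'a \<Rightarrow> real) \<Rightarrow> real \<Rightarrow> 'a \<Rightarrow> real \<Rightarrow> 'a \<Rightarrow> bool" where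
  "adj_plus_minus T R lam1 u lam2 v \<longleftrightarrow> lam2 = res_impl T lam1 (res_neg T (R v u))"

end

theory Submission
  imports Defs
begin

text \<open>Evaluating the \<open>T\<close>-disjointness condition at \<open>w = v\<close>, where \<open>R v v = 1\<close>, gives
  \<open>T(R(v,u), \<lambda>) = 0\<close> in both cases. Hence \<open>\<lambda> \<le> N(R(v,u))\<close>, so \<open>\<beta> = 1\<close> satisfies
  \<open>T(\<lambda>, \<beta>) \<le> N(R(v,u))\<close> and the residuum \<open>I(\<lambda>, N(R(v,u)))\<close> equals \<open>1\<close>.\<close>

lemma tnorm_one_right: "tnorm T \<Longrightarrow> x \<in> {0..1} \<Longrightarrow> T x 1 = x"
  unfolding tnorm_def by blast

lemma tnorm_one_left: "tnorm T \<Longrightarrow> x \<in> {0..1} \<Longrightarrow> T 1 x = x"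
  unfolding tnorm_def by (metis atLeastAtMost_iff order_refl zero_le_one)

lemma res_impl_upper:
  assumes "b \<in> {0..1}" and "T x b \<le> y"
  shows "b \<le> res_impl T x y"
  unfolding res_impl_def
  by (rule cSup_upper) (use assms in \<open>auto intro: bdd_aboveI[where M = 1]\<close>)

lemma res_impl_eq_one:
  assumes "tnorm T" and "x \<in> {0..1}" and "x \<le> y"
  shows "res_impl T x y = 1"
  unfolding res_impl_def
  by (rule cSup_eq_maximum) (use assms tnorm_one_right[OF assms(1,2)] in auto)

lemma res_impl_res_neg_eq_one:
  assumes "tnorm T" and "lam \<in> {0..1}" and "T a lam = 0"
  shows "res_impl T lam (res_neg T a) = 1"
proof -
  have "lam \<le> res_neg T a"
    unfolding res_neg_def using assms(2,3) by (intro res_impl_upper) auto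
  then show ?thesis
    using assms(1,2) by (rule res_impl_eq_one[rotated 2])
qed

lemma t_disjoint_granules_imp_tnorm_zero:
  assumes T: "tnorm T" and R: "t_preorder T U R"
    and "u \<in> U" and v: "v \<in> U" and lam: "lam \<in> {0..1}"
  shows "t_disjoint T U (gran_plus T R 1 u) (gran_minus T R lam v) \<Longrightarrow> T (R v u) lam = 0"
    and "t_disjoint T U (gran_plus T R lam u) (gran_minus T R 1 v) \<Longrightarrow> T (R v u) lam = 0"
proof -
  have Rvu: "R v u \<in> {0..1}" and Rvv: "R v v = 1"
    using R \<open>u \<in> U\<close> v unfolding t_preorder_def by auto
  have "T (R v u) lam \<in> {0..1}"
    using T Rvu lam unfolding tnorm_def by blast
  note unit_laws = tnorm_one_left[OF T lam] tnorm_one_right[OF T Rvu] tnorm_one_right[OF T this]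
    tnorm_one_right[OF T, of 1]
  show "T (R v u) lam = 0"
    if "t_disjoint T U (gran_plus T R 1 u) (gran_minus T R lam v)"
  proof -
    have "T (T (R v u) 1) (T (R v v) lam) = 0"
      using that v unfolding t_disjoint_def gran_plus_def gran_minus_def by blast
    then show ?thesis by (simp add: Rvv unit_laws)
  qed
  show "T (R v u) lam = 0"
    if "t_disjoint T U (gran_plus T R lam u) (gran_minus T R 1 v)"
  proof -
    have "T (T (R v u) lam) (T (R v v) 1) = 0"
      using that v unfolding t_disjoint_def gran_plus_def gran_minus_def by blast
    then show ?thesis by (simp add: Rvv unit_laws)
  qed
qed

theorem proposition5:
  fixes U :: "'a set" and T :: "real \<Rightarrow> real \<Rightarrow> real" and R :: "'a \<Rightarrow> 'a \<Rightarrow> real"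
    and u v :: 'a and lam :: real
  assumes "finite U" and "U \<noteq> {}"
    and "left_continuous_tnorm T"
    and "t_preorder T U R"
    and "u \<in> U" and "v \<in> U" and "lam \<in> {0..1}"
  shows "(t_disjoint T U (gran_plus T R 1 u) (gran_minus T R lam v)
            \<longrightarrow> adj_minus_plus T R lam v 1 u)
       \<and> (t_disjoint T U (gran_plus T R lam u) (gran_minus T R 1 v)
            \<longrightarrow> adj_plus_minus T R lam u 1 v)"
proof -
  have T: "tnorm T"
    using assms(3) unfolding left_continuous_tnorm_def by simp
  note zero = t_disjoint_granules_imp_tnorm_zero[OF T assms(4-7)]
  show ?thesis
    unfolding adj_minus_plus_def adj_plus_minus_def
    using res_impl_res_neg_eq_one[OF T assms(7)] zero by simp
qed

end
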